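(* Let $M$ and $N$ be positive integers with $N \le M$, and let $S=\{\vec b\in\mathbb{F}_2^M : H(\vec b)=N\}$, where $H(\vec b)$ denotes the Hamming weight. Then there exist a nonnegative integer $Q$ with $Q\le 2N\log_2 M$ and a binary $Q\times M$ matrix $\mathbf{G}$ over $\mathbb{F}_2$ such that the linear map $\vec b\mapsto \mathbf{G}\vec b$ (arithmetic mod 2) is injective on $S$.
   Context: A fermionic system with $M$ modes and $N$ particles has its particle-number-conserving Fock basis states labelled by the bitstrings in $S$ (occupation vectors of weight $N$). A "linear (number-conserving) encoding" into $Q$ qubits is a binary matrix $\mathbf{G}\in\mathbb{F}_2^{Q\times M}$ mapping $|\vec b\rangle\mapsto|\mathbf{G}\vec b\rangle$ that is injective on $S$; $Q$ is its qubit cost. Logarithms are base 2. *)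

theory Defs
  imports Complex_Main "HOL-Library.Z2"
begin

text \<open>Vectors in F_2^M are represented as functions nat => bit, with components
  indexed by 0..M-1 (values outside this range are required to be 0).
  A Q x M matrix over F_2 is a function nat => nat => bit (row, column).\<close>

definition f2_vecs :: "nat \<Rightarrow> (nat \<Rightarrow> bit) set" where
  "f2_vecs M = {b. \<forall>j. j \<ge> M \<longrightarrow> b j = 0}"

definition hamming_weight :: "nat \<Rightarrow> (nat \<Rightarrow> bit) \<Rightarrow> nat" where
  "hamming_weight M b = card {j. j < M \<and> b j \<noteq> 0}"

definition weight_set :: "nat \<Rightarrow> nat \<Rightarrow> (nat \<Rightarrow> bit) set" where
  "weight_set M N = {b \<in> f2_vecs M. hamming_weight M b = N}"

definition mat_vec :: "nat \<Rightarrow> nat \<Rightarrow> (nat \<Rightarrow> nat \<Rightarrow> bit) \<Rightarrow> (nat \<Rightarrow> bit) \<Rightarrow> (nat \<Rightarrow> bit)" where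
  "mat_vec Q M G b = (\<lambda>i. if i < Q then (\<Sum>j<M. G i j * b j) else 0)"

end

theory Submission
  imports Defs "HOL-Library.FuncSet"
begin

text \<open>Choose the columns of \<open>G\<close> greedily, in the manner of the Gilbert--Varshamov bound, so that
  every nonempty set of at most \<open>2N\<close> columns has a nonzero sum. There are at most \<open>M\<^bsup>2N-1\<^esup>\<close>
  sums of at most \<open>2N - 1\<close> earlier columns, so with \<open>M\<^bsup>2N-1\<^esup> < 2\<^bsup>Q\<^esup>\<close> some vector in
  \<open>\<bbbF>\<^sub>2\<^bsup>Q\<^esup>\<close> avoids all of them and can serve as the next column; \<open>Q\<close> can be chosen with
  \<open>2\<^bsup>Q\<^esup> \<le> M\<^bsup>2N\<^esup>\<close>. If \<open>Gb = Gb'\<close> for two vectors of weight \<open>N\<close>, then the columns indexed by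
  the symmetric difference of their supports, a set of at most \<open>2N\<close> indices, sum to zero, so
  the supports coincide. For \<open>M = 1\<close> the bound forces \<open>Q = 0\<close>, but then \<open>S\<close> is a single
  vector.\<close>

\<comment> \<open>keep \<open>+\<close> and \<open>*\<close> on \<open>bit\<close> as field operations instead of rewriting them to XOR and AND\<close>
declare add_bit_eq_xor [simp del] mult_bit_eq_and [simp del]

lemma bit_add_eq_0_iff: "(a::bit) + b = 0 \<longleftrightarrow> a = b"
  by (cases a; cases b) simp_all

lemma card_UNIV_bit: "card (UNIV::bit set) = 2"
proof -
  have UNIV_eq: "(UNIV::bit set) = {0, 1}"
    using bit_not_zero_iff by blast
  show ?thesis by (subst UNIV_eq) simp
qed

lemma card_bounded_subsets_lessThan_le: "card {T. T \<subseteq> {..<m} \<and> card T \<le> d} \<le> (m + 1) ^ d"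
proof -
  let ?L = "{xs. set xs \<subseteq> {..m} \<and> length xs = d}"
  have finite_L: "finite ?L"
    by (rule finite_lists_length_eq) simp
  \<comment> \<open>pad the sorted elements of \<open>T\<close> with the dummy entry \<open>m\<close>\<close>
  have "{T. T \<subseteq> {..<m} \<and> card T \<le> d} \<subseteq> (\<lambda>xs. set xs - {m}) ` ?L"
  proof
    fix T assume T: "T \<in> {T. T \<subseteq> {..<m} \<and> card T \<le> d}"
    then have "finite T" using finite_subset by blast
    define xs where "xs = sorted_list_of_set T @ replicate (d - card T) m"
    have "set xs - {m} = T" and "xs \<in> ?L"
      using T \<open>finite T\<close> by (auto simp: xs_def)
    then show "T \<in> (\<lambda>xs. set xs - {m}) ` ?L" by blast
  qed
  then have "card {T. T \<subseteq> {..<m} \<and> card T \<le> d} \<le> card ((\<lambda>xs. set xs - {m}) ` ?L)"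
    by (intro card_mono finite_imageI finite_L)
  also have "\<dots> \<le> card ?L"
    by (rule card_image_le[OF finite_L])
  also have "\<dots> = (m + 1) ^ d"
    by (subst card_lists_length_eq) simp_all
  finally show ?thesis .
qed

text \<open>Over \<open>\<bbbF>\<^sub>2\<close> a set of vectors is linearly dependent iff a nonempty subset of it sums to zero,
  so this says that any \<open>d\<close> of the first \<open>m\<close> columns of the \<open>Q\<close>-row matrix \<open>G\<close> are linearly
  independent.\<close>

definition columns_independent :: "nat \<Rightarrow> nat \<Rightarrow> nat \<Rightarrow> (nat \<Rightarrow> nat \<Rightarrow> bit) \<Rightarrow> bool" where
  "columns_independent Q d m G \<longleftrightarrow>
     (\<forall>T. T \<subseteq> {..<m} \<longrightarrow> T \<noteq> {} \<longrightarrow> card T \<le> d \<longrightarrow> (\<exists>i<Q. (\<Sum>j\<in>T. G i j) \<noteq> 0))"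

lemma columns_independent_extend:
  assumes indep: "columns_independent Q d m G" and small: "(m + 1) ^ (d - 1) < 2 ^ Q"
  obtains v where "columns_independent Q d (Suc m) (\<lambda>i j. if j = m then v i else G i j)"
proof -
  let ?V = "{..<Q} \<rightarrow>\<^sub>E (UNIV::bit set)"
  let ?F = "{T. T \<subseteq> {..<m} \<and> card T \<le> d - 1}"
  let ?sum = "\<lambda>T. restrict (\<lambda>i. \<Sum>j\<in>T. G i j) {..<Q}"
  have finite_F: "finite ?F" by simp
  have "card (?sum ` ?F) \<le> card ?F"
    by (rule card_image_le[OF finite_F])
  also have "\<dots> < card ?V"
    using card_bounded_subsets_lessThan_le[of m "d - 1"] small by (simp add: card_PiE card_UNIV_bit)
  finally have "\<not> ?V \<subseteq> ?sum ` ?F"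
    using card_mono[OF finite_imageI[OF finite_F]] by fastforce
  then obtain v where v: "v \<in> ?V" "v \<notin> ?sum ` ?F" by blast
  let ?G = "\<lambda>i j. if j = m then v i else G i j"
  have extended: "\<exists>i<Q. (\<Sum>j\<in>T. ?G i j) \<noteq> 0"
    if T: "T \<subseteq> {..<Suc m}" "T \<noteq> {}" "card T \<le> d" for T
  proof (cases "m \<in> T")
    case False
    then have "T \<subseteq> {..<m}" using T(1) by (auto simp: less_Suc_eq)
    then obtain i where "i < Q" "(\<Sum>j\<in>T. G i j) \<noteq> 0"
      using indep T(2,3) unfolding columns_independent_def by blast
    moreover have "(\<Sum>j\<in>T. ?G i j) = (\<Sum>j\<in>T. G i j)"
      using False by (intro sum.cong) auto
    ultimately show ?thesis by auto
  next
    case True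
    have "finite T" using T(1) finite_subset by blast
    have "T - {m} \<in> ?F"
      using T True \<open>finite T\<close> by (auto simp: less_Suc_eq)
    then have "v \<noteq> ?sum (T - {m})" using v(2) by blast
    then obtain i where i: "v i \<noteq> ?sum (T - {m}) i" by blast
    then have "i < Q"
      using v(1) by (cases "i < Q") (auto simp: PiE_def extensional_def)
    with i have "i < Q" "v i \<noteq> (\<Sum>j\<in>T - {m}. G i j)" by auto
    moreover have "(\<Sum>j\<in>T. ?G i j) = v i + (\<Sum>j\<in>T - {m}. G i j)"
    proof -
      have "(\<Sum>j\<in>T. ?G i j) = ?G i m + (\<Sum>j\<in>T - {m}. ?G i j)"
        by (rule sum.remove[OF \<open>finite T\<close> True])
      also have "(\<Sum>j\<in>T - {m}. ?G i j) = (\<Sum>j\<in>T - {m}. G i j)"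
        by (rule sum.cong) auto
      finally show ?thesis by simp
    qed
    ultimately show ?thesis by (metis bit_add_eq_0_iff)
  qed
  have "columns_independent Q d (Suc m) ?G"
    unfolding columns_independent_def
  proof (intro allI impI)
    fix T assume "T \<subseteq> {..<Suc m}" "T \<noteq> {}" "card T \<le> d"
    then show "\<exists>i<Q. (\<Sum>j\<in>T. ?G i j) \<noteq> 0" by (rule extended)
  qed
  then show thesis by (rule that)
qed

lemma ex_columns_independent:
  assumes "m ^ (d - 1) < 2 ^ Q"
  shows "\<exists>G. columns_independent Q d m G"
proof -
  have "k \<le> m \<Longrightarrow> \<exists>G. columns_independent Q d k G" for k
  proof (induction k)
    case 0
    show ?case by (auto simp: columns_independent_def)
  next
    case (Suc k)
    then obtain G where "columns_independent Q d k G" by auto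
    moreover have "(k + 1) ^ (d - 1) < 2 ^ Q"
      using Suc.prems assms power_mono[of "k + 1" m "d - 1"] by simp
    ultimately show ?case
      by (meson columns_independent_extend)
  qed
  then show ?thesis by blast
qed

definition f2_support :: "nat \<Rightarrow> (nat \<Rightarrow> bit) \<Rightarrow> nat set" where
  "f2_support M b = {j. j < M \<and> b j \<noteq> 0}"

lemma hamming_weight_eq_card_support: "hamming_weight M b = card (f2_support M b)"
  by (simp add: hamming_weight_def f2_support_def)

lemma f2_support_add_subset: "f2_support M (\<lambda>j. b j + c j) \<subseteq> f2_support M b \<union> f2_support M c"
  by (auto simp: f2_support_def)

lemma mat_vec_add: "mat_vec Q M G (\<lambda>j. b j + c j) i = mat_vec Q M G b i + mat_vec Q M G c i"
  by (simp add: mat_vec_def distrib_left sum.distrib)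

lemma mat_vec_eq_sum_support:
  "mat_vec Q M G b i = (if i < Q then \<Sum>j\<in>f2_support M b. G i j else 0)"
proof -
  have "(\<Sum>j<M. G i j * b j) = (\<Sum>j<M. if b j \<noteq> 0 then G i j else 0)"
    by (intro sum.cong) auto
  also have "\<dots> = (\<Sum>j\<in>f2_support M b. G i j)"
    by (simp add: sum.If_cases f2_support_def Collect_conj_eq lessThan_def)
  finally show ?thesis by (simp add: mat_vec_def)
qed

lemma mat_vec_nonzero:
  assumes "columns_independent Q d M G" and "f2_support M b \<noteq> {}" and "card (f2_support M b) \<le> d"
  shows "\<exists>i. mat_vec Q M G b i \<noteq> 0"
proof -
  have "f2_support M b \<subseteq> {..<M}"
    by (auto simp: f2_support_def)
  with assms obtain i where "i < Q" "(\<Sum>j\<in>f2_support M b. G i j) \<noteq> 0"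
    unfolding columns_independent_def by blast
  then show ?thesis
    by (metis mat_vec_eq_sum_support)
qed

lemma inj_on_mat_vec_weight_set:
  assumes indep: "columns_independent Q (2 * N) M G"
  shows "inj_on (mat_vec Q M G) (weight_set M N)"
proof (rule inj_onI)
  fix b c assume b: "b \<in> weight_set M N" and c: "c \<in> weight_set M N"
    and eq: "mat_vec Q M G b = mat_vec Q M G c"
  let ?x = "\<lambda>j. b j + c j"
  have "mat_vec Q M G ?x i = 0" for i
    using eq by (simp add: mat_vec_add)
  moreover have "card (f2_support M ?x) \<le> 2 * N"
  proof -
    have "card (f2_support M ?x) \<le> card (f2_support M b \<union> f2_support M c)"
      by (intro card_mono f2_support_add_subset) (simp add: f2_support_def)
    also have "\<dots> \<le> card (f2_support M b) + card (f2_support M c)"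
      by (rule card_Un_le)
    finally show ?thesis
      using b c by (simp add: weight_set_def hamming_weight_eq_card_support)
  qed
  ultimately have "f2_support M ?x = {}"
    using mat_vec_nonzero[OF indep] by blast
  then have "b j = c j" if "j < M" for j
    using that by (auto simp: f2_support_def bit_add_eq_0_iff)
  moreover have "b j = c j" if "j \<ge> M" for j
    using b c that by (simp add: weight_set_def f2_vecs_def)
  ultimately show "b = c"
    by (metis not_le ext)
qed

lemma weight_set_full: "weight_set M M = {\<lambda>j. if j < M then 1 else 0}"
proof (intro equalityI subsetI)
  fix b assume b: "b \<in> weight_set M M"
  then have "f2_support M b = {..<M}"
    by (intro card_subset_eq)
      (auto simp: weight_set_def hamming_weight_eq_card_support f2_support_def)
  with b show "b \<in> {\<lambda>j. if j < M then 1 else 0}"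
    by (auto simp: weight_set_def f2_vecs_def f2_support_def set_eq_iff fun_eq_iff)
next
  fix b :: "nat \<Rightarrow> bit" assume b: "b \<in> {\<lambda>j. if j < M then 1 else 0}"
  then have "f2_support M b = {..<M}"
    by (auto simp: f2_support_def)
  with b show "b \<in> weight_set M M"
    by (simp add: weight_set_def f2_vecs_def hamming_weight_eq_card_support)
qed

lemma ex_power_two_between:
  fixes M N :: nat
  assumes "2 \<le> M" and "0 < N"
  obtains Q :: nat where "2 ^ Q \<le> M ^ (2 * N)" and "M ^ (2 * N - 1) < 2 ^ Q"
proof -
  obtain Q :: nat where Q: "2 ^ Q \<le> M ^ (2 * N)" "M ^ (2 * N) < 2 ^ (Q + 1)"
    using ex_power_ivl1[of 2 "M ^ (2 * N)"] assms by auto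
  have "M ^ (2 * N) = M * M ^ (2 * N - 1)"
    using assms(2) by (simp flip: power_Suc)
  then have "2 * M ^ (2 * N - 1) \<le> M ^ (2 * N)"
    using assms(1) by simp
  with Q show thesis
    by (intro that) auto
qed

theorem theorem1:
  fixes M N :: nat
  assumes "0 < M" and "0 < N" and "N \<le> M"
  shows "\<exists>Q::nat. \<exists>G :: nat \<Rightarrow> nat \<Rightarrow> bit.
           real Q \<le> 2 * real N * log 2 (real M) \<and>
           inj_on (mat_vec Q M G) (weight_set M N)"
proof (cases "M = 1")
  case True
  with assms have "weight_set M N = {\<lambda>j. if j < M then 1 else 0}"
    using weight_set_full[of M] by (simp add: le_Suc_eq)
  with True show ?thesis by auto
next
  case False
  with assms obtain Q where Q: "2 ^ Q \<le> M ^ (2 * N)" "M ^ (2 * N - 1) < 2 ^ Q"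
    using ex_power_two_between[of M N] by auto
  then obtain G where "columns_independent Q (2 * N) M G"
    using ex_columns_independent by blast
  then have "inj_on (mat_vec Q M G) (weight_set M N)"
    by (rule inj_on_mat_vec_weight_set)
  moreover have "real Q \<le> 2 * real N * log 2 (real M)"
    using le_log2_of_power[OF Q(1)] by (simp add: log_nat_power)
  ultimately show ?thesis by blast
qed

end
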